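(* Assume the setting below. Let $h=\max\{1,\lceil 8\kappa_Q^{1/2}C_A t_{\mathrm{mix}}/a\rceil\}$ and $\mathbf Y_1=(\mathrm I-\alpha\mathbf A(Z_h))(\mathrm I-\alpha\mathbf A(Z_{h-1}))\cdots(\mathrm I-\alpha\mathbf A(Z_1))$. Then for any $\alpha\in(0,\alpha^{(\mathrm M)}_\infty t_{\mathrm{mix}}^{-1}]$ and any initial probability measure $\xi$ on $(\mathsf Z,\mathcal Z)$, $\mathbb P_\xi$-almost surely, $$\|\mathbf Y_1-\mathbb E_\xi[\mathbf Y_1]\|_Q\le C_\sigma\,\alpha h,\qquad C_\sigma=2\bigl(\kappa_Q^{1/2}C_A+a/6\bigr).$$
   Context: Markov setting: $(\mathsf Z,\mathsf d_{\mathsf Z})$ is a Polish space with Borel $\sigma$-field $\mathcal Z$; $\mathrm P$ is a Markov kernel on $\mathsf Z\times\mathcal Z$ with invariant probability distribution $\pi$; for a probability measure $\xi$ on $\mathsf Z$, $(Z_k)_{k\ge0}$ denotes the Markov chain with kernel $\mathrm P$ and $Z_0\sim\xi$, with law $\mathbb P_\xi$ and expectation $\mathbb E_\xi$. For $k\ge1$, $\Delta(\mathrm P^k)=\sup_{z,z'\in\mathsf Z}\frac12\|\mathrm P^k(z,\cdot)-\mathrm P^k(z',\cdot)\|_{\mathrm{TV}}$ (total variation norm). Assume there is $t_{\mathrm{mix}}\in\mathbb N^*$ with $\Delta(\mathrm P^k)\le(1/4)^{\lfloor k/t_{\mathrm{mix}}\rfloor}$ for all $k\in\mathbb N^*$.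 LSA data: $d\ge1$; $\mathbf A:\mathsf Z\to\mathbb R^{d\times d}$ measurable with $\bar{\mathbf A}=\int\mathbf A\,d\pi$; $\|\cdot\|$ is the Euclidean/spectral norm; $-\bar{\mathbf A}$ is Hurwitz (all eigenvalues of $\bar{\mathbf A}$ have positive real part); $C_A:=\sup_z\|\mathbf A(z)\|\vee\sup_z\|\mathbf A(z)-\bar{\mathbf A}\|<\infty$. $Q$ is the unique symmetric positive definite solution of $\bar{\mathbf A}^\top Q+Q\bar{\mathbf A}=\mathrm I$; $\|x\|_Q=(x^\top Qx)^{1/2}$, $\|B\|_Q=\max_{\|x\|_Q=1}\|Bx\|_Q$; $\kappa_Q=\lambda_{\max}(Q)/\lambda_{\min}(Q)$; $a=1/(2\|Q\|)$; $\alpha_\infty=\min\{1/(2\|\bar{\mathbf A}\|_Q^2\|Q\|),\|Q\|\}$; and $$\alpha^{(\mathrm M)}_\infty=\min\Bigl\{\alpha_\infty,\ \kappa_Q^{-1/2}C_A^{-1},\ \frac{a}{6e\kappa_QC_A^2}\Bigr\}\Big/\bigl\lceil 8\kappa_Q^{1/2}C_A/a\bigr\rceil .$$ *)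

theory Defs
  imports "HOL-Probability.Probability"
begin

fun kpow :: "('z::topological_space \<Rightarrow> 'z measure) \<Rightarrow> nat \<Rightarrow> 'z \<Rightarrow> 'z measure" where
  "kpow P 0 z = return borel z"
| "kpow P (Suc k) z = bind (kpow P k z) P"

definition tv_norm_diff :: "'z::topological_space measure \<Rightarrow> 'z measure \<Rightarrow> real" where
  "tv_norm_diff \<mu> \<nu> = Sup {(\<Sum>B\<in>F. \<bar>measure \<mu> B - measure \<nu> B\<bar>) | F.
       finite F \<and> F \<subseteq> sets borel \<and> disjoint F}"

definition dobrushin :: "('z::topological_space \<Rightarrow> 'z measure) \<Rightarrow> real" where
  "dobrushin K = Sup {tv_norm_diff (K z) (K z') / 2 | z z'. True}"

text \<open>(Z_k) is a Markov chain with kernel P and initial law xi, realised on the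
  probability space M: Z_0 ~ xi and for every n the conditional law of Z_{n+1} given
  (Z_0,...,Z_n) is P(Z_n, .).\<close>
definition markov_chain ::
  "'w measure \<Rightarrow> (nat \<Rightarrow> 'w \<Rightarrow> 'z::topological_space) \<Rightarrow> ('z \<Rightarrow> 'z measure) \<Rightarrow> 'z measure \<Rightarrow> bool" where
  "markov_chain M Z P \<xi> \<longleftrightarrow>
     prob_space M \<and> (\<forall>i. Z i \<in> borel_measurable M) \<and> distr M borel (Z 0) = \<xi> \<and>
     (\<forall>n B A. B \<in> sets (PiM {0..n} (\<lambda>_. borel)) \<longrightarrow> A \<in> sets borel \<longrightarrow>
        measure M {\<omega> \<in> space M. (\<lambda>i\<in>{0..n}. Z i \<omega>) \<in> B \<and> Z (Suc n) \<omega> \<in> A}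
        = (\<integral>\<omega>. indicator B (\<lambda>i\<in>{0..n}. Z i \<omega>) * measure (P (Z n \<omega>)) A \<partial>M))"

definition invariant :: "('z::topological_space \<Rightarrow> 'z measure) \<Rightarrow> 'z measure \<Rightarrow> bool" where
  "invariant P \<pi> \<longleftrightarrow> prob_space \<pi> \<and> sets \<pi> = sets borel \<and>
     (\<forall>A \<in> sets borel. measure \<pi> A = (\<integral>z. measure (P z) A \<partial>\<pi>))"

definition opnorm :: "real^'d^'d \<Rightarrow> real" where
  "opnorm B = onorm (\<lambda>x. B *v x)"

definition neg_hurwitz :: "real^'d^'d \<Rightarrow> bool" where
  "neg_hurwitz B \<longleftrightarrow> (\<forall>(\<mu>::complex) (v::complex^'d). v \<noteq> 0 \<and>
      (\<chi> i j. complex_of_real (B $ i $ j)) *v v = \<mu> *s v \<longrightarrow> Re \<mu> > 0)"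

definition pos_def :: "real^'d^'d \<Rightarrow> bool" where
  "pos_def Q \<longleftrightarrow> transpose Q = Q \<and> (\<forall>x. x \<noteq> 0 \<longrightarrow> x \<bullet> (Q *v x) > 0)"

definition real_eigenvalues :: "real^'d^'d \<Rightarrow> real set" where
  "real_eigenvalues Q = {\<mu>. \<exists>v. v \<noteq> 0 \<and> Q *v v = \<mu> *\<^sub>R v}"

definition lam_max :: "real^'d^'d \<Rightarrow> real" where
  "lam_max Q = Max (real_eigenvalues Q)"

definition lam_min :: "real^'d^'d \<Rightarrow> real" where
  "lam_min Q = Min (real_eigenvalues Q)"

definition kappa :: "real^'d^'d \<Rightarrow> real" where
  "kappa Q = lam_max Q / lam_min Q"

definition vnormQ :: "real^'d^'d \<Rightarrow> real^'d \<Rightarrow> real" where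
  "vnormQ Q x = sqrt (x \<bullet> (Q *v x))"

definition mnormQ :: "real^'d^'d \<Rightarrow> real^'d^'d \<Rightarrow> real" where
  "mnormQ Q B = Sup {vnormQ Q (B *v x) | x. vnormQ Q x = 1}"

definition C_A :: "('z \<Rightarrow> real^'d^'d) \<Rightarrow> real^'d^'d \<Rightarrow> real" where
  "C_A A Abar = max (SUP z. opnorm (A z)) (SUP z. opnorm (A z - Abar))"

definition a_const :: "real^'d^'d \<Rightarrow> real" where
  "a_const Q = 1 / (2 * opnorm Q)"

definition alpha_inf :: "real^'d^'d \<Rightarrow> real^'d^'d \<Rightarrow> real" where
  "alpha_inf Q Abar = min (1 / (2 * (mnormQ Q Abar)\<^sup>2 * opnorm Q)) (opnorm Q)"

definition alpha_inf_M :: "real^'d^'d \<Rightarrow> real^'d^'d \<Rightarrow> real \<Rightarrow> real" where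
  "alpha_inf_M Q Abar CA =
     Min {alpha_inf Q Abar, 1 / (sqrt (kappa Q) * CA),
          a_const Q / (6 * exp 1 * kappa Q * CA\<^sup>2)}
     / real_of_int \<lceil>8 * sqrt (kappa Q) * CA / a_const Q\<rceil>"

fun prodY :: "('z \<Rightarrow> real^'d^'d) \<Rightarrow> real \<Rightarrow> (nat \<Rightarrow> 'w \<Rightarrow> 'z) \<Rightarrow> nat \<Rightarrow> 'w \<Rightarrow> real^'d^'d" where
  "prodY A \<alpha> Z 0 \<omega> = mat 1"
| "prodY A \<alpha> Z (Suc k) \<omega> = (mat 1 - \<alpha> *\<^sub>R A (Z (Suc k) \<omega>)) ** prodY A \<alpha> Z k \<omega>"

end

theory Submission
  imports Defs
begin

text \<open>The bound holds for every realisation of the chain, so none of the mixing, invariance or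
  stability hypotheses is needed. Each factor satisfies \<open>\<parallel>I - \<alpha> A(Z\<^sub>k)\<parallel> \<le> 1 + \<alpha> C\<^sub>A\<close>,
  so expanding the product gives \<open>\<parallel>Y\<^sub>1 - I\<parallel> \<le> (1 + \<alpha> C\<^sub>A)\<^sup>h - 1\<close> pointwise, and the same
  bound holds for \<open>\<parallel>E Y\<^sub>1 - I\<parallel>\<close>. Passing to the \<open>Q\<close>-norm costs a factor \<open>\<kappa>\<^sub>Q\<^sup>1\<^sup>/\<^sup>2\<close>.
  The step size makes \<open>y = \<alpha> h C\<^sub>A \<le> 1\<close>, whence \<open>(1 + \<alpha> C\<^sub>A)\<^sup>h - 1 \<le> e\<^sup>y - 1 \<le> y + y\<^sup>2\<close>,
  and it also bounds \<open>\<kappa>\<^sub>Q\<^sup>1\<^sup>/\<^sup>2 y\<^sup>2\<close> by \<open>\<alpha> h a/6\<close>.\<close>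

section \<open>Quadratic forms of symmetric matrices\<close>

lemma symmetric_matrix_inner_commute:
  fixes Q :: "real^'d^'d"
  assumes "transpose Q = Q"
  shows "(Q *v x) \<bullet> y = x \<bullet> (Q *v y)"
proof -
  have "Q *v x = x v* Q" using vector_transpose_matrix[of x Q] assms by simp
  thus ?thesis by (simp add: dot_lmul_matrix)
qed

lemma quadratic_form_scaleR: "(c *\<^sub>R x) \<bullet> (Q *v (c *\<^sub>R x)) = c\<^sup>2 * (x \<bullet> (Q *v x))"
  for Q :: "real^'d^'d"
  by (simp add: matrix_vector_mult_scaleR power2_eq_square)

lemma quadratic_form_maximiser_eigenvector:
  fixes Q :: "real^'d^'d"
  assumes sym: "transpose Q = Q" and u: "norm u = 1"
    and max: "\<And>x. x \<bullet> (Q *v x) \<le> (u \<bullet> (Q *v u)) * (norm x)\<^sup>2"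
  shows "Q *v u = (u \<bullet> (Q *v u)) *\<^sub>R u"
proof -
  define \<mu> where "\<mu> = u \<bullet> (Q *v u)"
  define w where "w = Q *v u - \<mu> *\<^sub>R u"
  define K where "K = \<mu> * (norm w)\<^sup>2 - w \<bullet> (Q *v w)"
  have uu: "u \<bullet> u = 1" using u by (simp add: norm_eq_1)
  have uw: "u \<bullet> w = 0" unfolding w_def \<mu>_def by (simp add: inner_diff_right uu)
  hence wu: "w \<bullet> u = 0" by (simp add: inner_commute)
  have wQu: "w \<bullet> (Q *v u) = (norm w)\<^sup>2"
  proof -
    have "Q *v u = w + \<mu> *\<^sub>R u" by (simp add: w_def)
    thus ?thesis using wu by (simp add: inner_add_right power2_norm_eq_inner)
  qed
  \<comment> \<open>Maximality along the line \<open>u + t w\<close> forces the first variation \<open>2 t \<parallel>w\<parallel>\<^sup>2\<close> to be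
    dominated by the second-order term.\<close>
  have variation: "2 * t * (norm w)\<^sup>2 \<le> t\<^sup>2 * K" for t :: real
  proof -
    have "(u + t *\<^sub>R w) \<bullet> (Q *v (u + t *\<^sub>R w))
          = u \<bullet> (Q *v u) + t * (u \<bullet> (Q *v w)) + t * (w \<bullet> (Q *v u)) + t\<^sup>2 * (w \<bullet> (Q *v w))"
      by (simp add: matrix_vector_right_distrib matrix_vector_mult_scaleR
          inner_add_left inner_add_right power2_eq_square algebra_simps)
    also have "u \<bullet> (Q *v w) = w \<bullet> (Q *v u)"
      using symmetric_matrix_inner_commute[OF sym, of u w] by (simp add: inner_commute)
    finally have "(u + t *\<^sub>R w) \<bullet> (Q *v (u + t *\<^sub>R w)) = \<mu> + 2 * t * (norm w)\<^sup>2 + t\<^sup>2 * (w \<bullet> (Q *v w))"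
      using wQu by (simp add: \<mu>_def)
    moreover have "(norm (u + t *\<^sub>R w))\<^sup>2 = 1 + t\<^sup>2 * (norm w)\<^sup>2"
      unfolding power2_norm_eq_inner using uu uw wu
      by (simp add: inner_add_left inner_add_right power2_eq_square algebra_simps)
    moreover have "(u + t *\<^sub>R w) \<bullet> (Q *v (u + t *\<^sub>R w)) \<le> \<mu> * (norm (u + t *\<^sub>R w))\<^sup>2"
      unfolding \<mu>_def by (rule max)
    ultimately show ?thesis by (simp add: K_def algebra_simps)
  qed
  have "w = 0"
  proof (rule ccontr)
    assume "w \<noteq> 0"
    hence p: "(norm w)\<^sup>2 > 0" by simp
    define t where "t = (norm w)\<^sup>2 / (\<bar>K\<bar> + 1)"
    have tp: "t > 0" using p by (simp add: t_def)
    have "2 * t * (norm w)\<^sup>2 \<le> t * (t * K)" using variation[of t] by (simp add: power2_eq_square algebra_simps)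
    hence "2 * (norm w)\<^sup>2 \<le> t * K" using tp by simp
    also have "t * K \<le> t * \<bar>K\<bar>" using tp by (simp add: mult_left_mono)
    also have "t * \<bar>K\<bar> < (norm w)\<^sup>2" using p by (simp add: t_def field_simps)
    finally show False using p by simp
  qed
  thus ?thesis by (simp add: w_def \<mu>_def)
qed

lemma symmetric_matrix_max_eigenvalue:
  fixes Q :: "real^'d^'d"
  assumes sym: "transpose Q = Q"
  shows "\<exists>\<mu>\<in>real_eigenvalues Q. \<forall>x. x \<bullet> (Q *v x) \<le> \<mu> * (norm x)\<^sup>2"
proof -
  let ?f = "\<lambda>x::real^'d. x \<bullet> (Q *v x)"
  have cont: "continuous_on (sphere 0 1) ?f"
    by (intro continuous_intros linear_continuous_on matrix_vector_mul_bounded_linear)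
  have ne: "sphere (0::real^'d) 1 \<noteq> {}"
    using norm_axis_1[of undefined] by (metis mem_sphere_0 empty_iff)
  obtain u where u: "norm u = 1" and umax: "\<And>y. norm y = 1 \<Longrightarrow> ?f y \<le> ?f u"
    using continuous_attains_sup[OF compact_sphere ne cont] by auto
  have bound: "?f x \<le> ?f u * (norm x)\<^sup>2" for x
  proof (cases "x = 0")
    case False
    have "?f ((1 / norm x) *\<^sub>R x) \<le> ?f u" using False by (intro umax) simp
    hence "(1 / norm x)\<^sup>2 * ?f x \<le> ?f u" by (simp only: quadratic_form_scaleR)
    thus ?thesis using False by (simp add: field_simps)
  qed simp
  have "Q *v u = ?f u *\<^sub>R u"
    by (rule quadratic_form_maximiser_eigenvector[OF sym u bound])
  moreover have "u \<noteq> 0" using u by auto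
  ultimately have "?f u \<in> real_eigenvalues Q" unfolding real_eigenvalues_def by blast
  thus ?thesis using bound by blast
qed

lemma symmetric_matrix_min_eigenvalue:
  fixes Q :: "real^'d^'d"
  assumes sym: "transpose Q = Q"
  shows "\<exists>\<mu>\<in>real_eigenvalues Q. \<forall>x. \<mu> * (norm x)\<^sup>2 \<le> x \<bullet> (Q *v x)"
proof -
  have neg_mv: "(-Q) *v x = - (Q *v x)" for x :: "real^'d"
    by (simp add: matrix_vector_mult_def vec_eq_iff sum_negf)
  have "transpose (-Q) = - transpose Q" by (simp add: transpose_def vec_eq_iff)
  hence "transpose (-Q) = -Q" using sym by simp
  then obtain \<nu> where \<nu>: "\<nu> \<in> real_eigenvalues (-Q)" and bound: "\<And>x. x \<bullet> ((-Q) *v x) \<le> \<nu> * (norm x)\<^sup>2"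
    using symmetric_matrix_max_eigenvalue by blast
  have "-\<nu> \<in> real_eigenvalues Q"
    using \<nu> unfolding real_eigenvalues_def neg_mv by (auto simp: minus_equation_iff[of "Q *v _"])
  moreover have "-\<nu> * (norm x)\<^sup>2 \<le> x \<bullet> (Q *v x)" for x using bound[of x] by (simp add: neg_mv)
  ultimately show ?thesis by blast
qed

lemma finite_real_eigenvalues:
  fixes Q :: "real^'d^'d"
  assumes sym: "transpose Q = Q"
  shows "finite (real_eigenvalues Q)"
proof -
  let ?S = "real_eigenvalues Q"
  define g where "g \<mu> = (SOME v. v \<noteq> 0 \<and> Q *v v = \<mu> *\<^sub>R v)" for \<mu>
  have g: "g \<mu> \<noteq> 0 \<and> Q *v g \<mu> = \<mu> *\<^sub>R g \<mu>" if "\<mu> \<in> ?S" for \<mu>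
    using that unfolding real_eigenvalues_def g_def by (metis (mono_tags, lifting) mem_Collect_eq someI_ex)
  have inj: "inj_on g ?S"
  proof (rule inj_onI)
    fix x y assume x: "x \<in> ?S" and y: "y \<in> ?S" and e: "g x = g y"
    have "x *\<^sub>R g x = y *\<^sub>R g x" using g[OF x] g[OF y] e by metis
    thus "x = y" using g[OF x] by (simp add: scaleR_cancel_right)
  qed
  have "pairwise orthogonal (g ` ?S)"
  proof (clarsimp simp: pairwise_def)
    fix x y assume x: "x \<in> ?S" and y: "y \<in> ?S" and ne: "g x \<noteq> g y"
    have "x * (g x \<bullet> g y) = (Q *v g x) \<bullet> g y" using g[OF x] by simp
    also have "\<dots> = g x \<bullet> (Q *v g y)" by (rule symmetric_matrix_inner_commute[OF sym])
    also have "\<dots> = y * (g x \<bullet> g y)" using g[OF y] by simp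
    finally show "orthogonal (g x) (g y)" using ne by (auto simp: orthogonal_def)
  qed
  moreover have "0 \<notin> g ` ?S" using g by auto
  ultimately have "independent (g ` ?S)" using pairwise_orthogonal_independent by blast
  hence "finite (g ` ?S)" using independent_bound by blast
  thus ?thesis using finite_imageD inj by blast
qed

lemma quadratic_form_le_lam_max:
  fixes Q :: "real^'d^'d"
  assumes "transpose Q = Q"
  shows "x \<bullet> (Q *v x) \<le> lam_max Q * (norm x)\<^sup>2"
proof -
  obtain \<mu> where \<mu>: "\<mu> \<in> real_eigenvalues Q" and "x \<bullet> (Q *v x) \<le> \<mu> * (norm x)\<^sup>2"
    using symmetric_matrix_max_eigenvalue[OF assms] by blast
  moreover have "\<mu> \<le> lam_max Q"
    unfolding lam_max_def using finite_real_eigenvalues[OF assms] \<mu> by simp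
  ultimately show ?thesis by (meson mult_right_mono zero_le_power2 order.trans)
qed

lemma lam_min_le_quadratic_form:
  fixes Q :: "real^'d^'d"
  assumes "transpose Q = Q"
  shows "lam_min Q * (norm x)\<^sup>2 \<le> x \<bullet> (Q *v x)"
proof -
  obtain \<mu> where \<mu>: "\<mu> \<in> real_eigenvalues Q" and "\<mu> * (norm x)\<^sup>2 \<le> x \<bullet> (Q *v x)"
    using symmetric_matrix_min_eigenvalue[OF assms] by blast
  moreover have "lam_min Q \<le> \<mu>"
    unfolding lam_min_def using finite_real_eigenvalues[OF assms] \<mu> by simp
  ultimately show ?thesis by (meson mult_right_mono zero_le_power2 order.trans)
qed

lemma pos_def_lam_min_pos:
  fixes Q :: "real^'d^'d"
  assumes pd: "pos_def Q"
  shows "0 < lam_min Q"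
proof -
  have sym: "transpose Q = Q" using pd by (simp add: pos_def_def)
  obtain \<mu> where "\<mu> \<in> real_eigenvalues Q" using symmetric_matrix_min_eigenvalue[OF sym] by blast
  hence "lam_min Q \<in> real_eigenvalues Q"
    unfolding lam_min_def using finite_real_eigenvalues[OF sym] by (intro Min_in) auto
  then obtain v where v: "v \<noteq> 0" "Q *v v = lam_min Q *\<^sub>R v" unfolding real_eigenvalues_def by auto
  have "v \<bullet> (Q *v v) > 0" using pd v(1) unfolding pos_def_def by blast
  hence "lam_min Q * (v \<bullet> v) > 0" using v(2) by simp
  moreover have "v \<bullet> v > 0" using v by simp
  ultimately show ?thesis by (simp add: zero_less_mult_iff)
qed

lemma lam_min_le_lam_max:
  fixes Q :: "real^'d^'d"
  assumes "transpose Q = Q"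
  shows "lam_min Q \<le> lam_max Q"
proof -
  let ?e = "axis undefined (1::real) :: real^'d"
  have "lam_min Q * (norm ?e)\<^sup>2 \<le> lam_max Q * (norm ?e)\<^sup>2"
    using lam_min_le_quadratic_form[OF assms] quadratic_form_le_lam_max[OF assms] by (rule order.trans)
  thus ?thesis by (simp add: norm_axis_1)
qed

lemma pos_def_kappa_ge_1:
  fixes Q :: "real^'d^'d"
  assumes pd: "pos_def Q"
  shows "1 \<le> kappa Q"
proof -
  have "transpose Q = Q" using pd by (simp add: pos_def_def)
  thus ?thesis using lam_min_le_lam_max pos_def_lam_min_pos[OF pd] unfolding kappa_def by simp
qed

section \<open>The operator norm of matrices\<close>

lemma norm_matrix_vector_le_opnorm: "norm (B *v x) \<le> opnorm B * norm x"
  unfolding opnorm_def by (rule onorm) simp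

lemma opnorm_nonneg: "0 \<le> opnorm B"
  unfolding opnorm_def by (rule onorm_pos_le) simp

lemma opnorm_mat_1_le: "opnorm (mat 1 :: real^'d^'d) \<le> 1"
proof -
  have "(*v) (mat 1 :: real^'d^'d) = (\<lambda>x. x)" by auto
  thus ?thesis unfolding opnorm_def using onorm_id_le by simp
qed

lemma opnorm_mult_le: "opnorm (B ** C) \<le> opnorm B * opnorm C"
  for B C :: "real^'d^'d"
proof -
  have "(*v) (B ** C) = (*v) B \<circ> (*v) C" by (auto simp: matrix_vector_mul_assoc)
  thus ?thesis unfolding opnorm_def by (simp add: onorm_compose)
qed

lemma opnorm_add_le: "opnorm (B + C) \<le> opnorm B + opnorm C"
  for B C :: "real^'d^'d"
  unfolding opnorm_def matrix_vector_mult_add_rdistrib by (simp add: onorm_triangle)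

lemma opnorm_uminus: "opnorm (- B) = opnorm B"
  for B :: "real^'d^'d"
proof -
  have "(*v) (- B) = (\<lambda>x. - (B *v x))" by (auto simp: matrix_vector_mult_def vec_eq_iff sum_negf)
  thus ?thesis unfolding opnorm_def using onorm_neg[of "(*v) B"] by simp
qed

lemma opnorm_diff_le: "opnorm (B - C) \<le> opnorm B + opnorm C"
  for B C :: "real^'d^'d"
  using opnorm_add_le[of B "- C"] by (simp add: opnorm_uminus)

lemma opnorm_scaleR: "opnorm (c *\<^sub>R B) = \<bar>c\<bar> * opnorm B"
  for B :: "real^'d^'d"
  unfolding opnorm_def scaleR_matrix_vector_assoc[symmetric] by (simp add: onorm_scaleR)

lemma norm_le_opnorm: "norm (B :: real^'d^'d) \<le> (real CARD('d))\<^sup>2 * opnorm B"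
proof -
  have "norm B \<le> (\<Sum>i\<in>UNIV. norm (B $ i))" unfolding norm_vec_def by (rule L2_set_le_sum) simp
  also have "\<dots> \<le> (\<Sum>i\<in>(UNIV::'d set). \<Sum>j\<in>(UNIV::'d set). opnorm B)"
  proof (rule sum_mono)
    fix i
    have "norm (B $ i) \<le> (\<Sum>j\<in>UNIV. \<bar>B $ i $ j\<bar>)" by (rule norm_le_l1_cart)
    also have "\<dots> \<le> (\<Sum>j\<in>(UNIV::'d set). opnorm B)"
      unfolding opnorm_def by (intro sum_mono matrix_component_le_onorm)
    finally show "norm (B $ i) \<le> (\<Sum>j\<in>(UNIV::'d set). opnorm B)" .
  qed
  also have "\<dots> = (real CARD('d))\<^sup>2 * opnorm B" by (simp add: power2_eq_square)
  finally show ?thesis .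
qed

lemma mnormQ_le_sqrt_kappa_opnorm:
  fixes Q B :: "real^'d^'d"
  assumes pd: "pos_def Q"
  shows "mnormQ Q B \<le> sqrt (kappa Q) * opnorm B"
proof -
  let ?l = "lam_min Q" and ?L = "lam_max Q"
  have sym: "transpose Q = Q" using pd by (simp add: pos_def_def)
  have lp: "0 < ?l" by (rule pos_def_lam_min_pos[OF pd])
  have Lp: "0 < ?L" using lp lam_min_le_lam_max[OF sym] by simp
  have ne: "{vnormQ Q (B *v x) | x. vnormQ Q x = 1} \<noteq> {}"
  proof -
    define e :: "real^'d" where "e = axis undefined 1"
    have qp: "e \<bullet> (Q *v e) > 0" using pd unfolding pos_def_def e_def by (simp add: axis_eq_0_iff)
    have "vnormQ Q ((1 / sqrt (e \<bullet> (Q *v e))) *\<^sub>R e) = 1"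
      unfolding vnormQ_def quadratic_form_scaleR using qp by (simp add: power_divide)
    thus ?thesis by blast
  qed
  show ?thesis unfolding mnormQ_def
  proof (rule cSup_least[OF ne], clarsimp)
    fix x :: "real^'d" assume "vnormQ Q x = 1"
    hence "x \<bullet> (Q *v x) = 1" unfolding vnormQ_def by simp
    hence "(norm x)\<^sup>2 \<le> 1 / ?l" using lam_min_le_quadratic_form[OF sym, of x] lp by (simp add: field_simps)
    hence nx: "norm x \<le> sqrt (1 / ?l)" by (simp add: real_le_rsqrt)
    have "vnormQ Q (B *v x) \<le> sqrt (?L * (norm (B *v x))\<^sup>2)"
      unfolding vnormQ_def using quadratic_form_le_lam_max[OF sym] by simp
    also have "\<dots> = sqrt ?L * norm (B *v x)" using Lp by (simp add: real_sqrt_mult)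
    also have "\<dots> \<le> sqrt ?L * (opnorm B * sqrt (1 / ?l))"
      using Lp by (intro mult_left_mono order.trans[OF norm_matrix_vector_le_opnorm]
          mult_left_mono[OF nx] opnorm_nonneg) simp_all
    also have "\<dots> = sqrt (kappa Q) * opnorm B"
      unfolding kappa_def by (simp add: real_sqrt_divide)
    finally show "vnormQ Q (B *v x) \<le> sqrt (kappa Q) * opnorm B" .
  qed
qed

lemma (in prob_space) opnorm_integral_le:
  fixes X :: "'a \<Rightarrow> real^'d^'d"
  assumes meas: "X \<in> borel_measurable M" and bound: "\<And>\<omega>. opnorm (X \<omega>) \<le> K"
  shows "integrable M X" "opnorm (\<integral>\<omega>. X \<omega> \<partial>M) \<le> K"
proof -
  have "AE \<omega> in M. norm (X \<omega>) \<le> (real CARD('d))\<^sup>2 * K"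
    by (intro AE_I2 order.trans[OF norm_le_opnorm] mult_left_mono bound) simp
  thus int: "integrable M X" using integrable_const_bound meas by blast
  show "opnorm (\<integral>\<omega>. X \<omega> \<partial>M) \<le> K"
    unfolding opnorm_def
  proof (rule onorm_le)
    fix v :: "real^'d"
    have "linear (\<lambda>B::real^'d^'d. B *v v)"
      by (rule linearI) (simp_all add: matrix_vector_mult_add_rdistrib scaleR_matrix_vector_assoc[symmetric])
    hence bl: "bounded_linear (\<lambda>B::real^'d^'d. B *v v)" by (simp add: linear_conv_bounded_linear)
    have "norm ((\<integral>\<omega>. X \<omega> \<partial>M) *v v) = norm (\<integral>\<omega>. X \<omega> *v v \<partial>M)"
      using integral_bounded_linear[OF bl int] by simp
    also have "\<dots> \<le> (\<integral>\<omega>. norm (X \<omega> *v v) \<partial>M)" by (rule integral_norm_bound)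
    also have "\<dots> \<le> (\<integral>\<omega>. K * norm v \<partial>M)"
    proof (rule integral_mono)
      show "integrable M (\<lambda>\<omega>. norm (X \<omega> *v v))"
        by (intro integrable_norm integrable_bounded_linear[OF bl int])
      show "norm (X \<omega> *v v) \<le> K * norm v" for \<omega>
        using norm_matrix_vector_le_opnorm[of "X \<omega>" v] bound[of \<omega>]
        by (meson mult_right_mono norm_ge_zero order.trans)
    qed simp
    also have "\<dots> = K * norm v" by (simp add: prob_space)
    finally show "norm ((\<integral>\<omega>. X \<omega> \<partial>M) *v v) \<le> K * norm v" .
  qed
qed

lemma (in prob_space) mnormQ_sub_integral_le:
  fixes Y :: "'a \<Rightarrow> real^'d^'d" and Q :: "real^'d^'d"
  assumes pd: "pos_def Q" and meas: "Y \<in> borel_measurable M"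
    and bound: "\<And>\<omega>. opnorm (Y \<omega> - mat 1) \<le> K"
  shows "mnormQ Q (Y \<omega> - (\<integral>\<omega>'. Y \<omega>' \<partial>M)) \<le> sqrt (kappa Q) * (2 * K)"
proof -
  let ?X = "\<lambda>\<omega>. Y \<omega> - mat 1"
  have int: "integrable M ?X" and EX: "opnorm (\<integral>\<omega>. ?X \<omega> \<partial>M) \<le> K"
    using opnorm_integral_le[of ?X K] meas bound by auto
  have "(\<integral>\<omega>. Y \<omega> \<partial>M) = (\<integral>\<omega>. ?X \<omega> + mat 1 \<partial>M)" by simp
  also have "\<dots> = (\<integral>\<omega>. ?X \<omega> \<partial>M) + (\<integral>\<omega>. mat 1 \<partial>M)"
    by (rule Bochner_Integration.integral_add[OF int integrable_const])
  also have "(\<integral>\<omega>. mat 1 \<partial>M) = mat 1" by (simp add: prob_space)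
  finally have "Y \<omega> - (\<integral>\<omega>'. Y \<omega>' \<partial>M) = ?X \<omega> - (\<integral>\<omega>'. ?X \<omega>' \<partial>M)"
    by (simp add: algebra_simps)
  hence "mnormQ Q (Y \<omega> - (\<integral>\<omega>'. Y \<omega>' \<partial>M)) \<le> sqrt (kappa Q) * opnorm (?X \<omega> - (\<integral>\<omega>'. ?X \<omega>' \<partial>M))"
    by (simp only: mnormQ_le_sqrt_kappa_opnorm[OF pd])
  also have "\<dots> \<le> sqrt (kappa Q) * (2 * K)"
    using bound[of \<omega>] EX pos_def_kappa_ge_1[OF pd] by (intro mult_left_mono order.trans[OF opnorm_diff_le]) auto
  finally show ?thesis .
qed

section \<open>The product of the random matrices\<close>

lemma measurable_prodY:
  fixes A :: "'z::topological_space \<Rightarrow> real^'d^'d"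
  assumes A: "A \<in> borel_measurable borel" and Z: "\<And>i. Z i \<in> borel_measurable M"
  shows "prodY A \<alpha> Z k \<in> borel_measurable M"
proof (induction k)
  case (Suc k)
  have mult: "continuous_on UNIV (\<lambda>x::(real^'d^'d) \<times> (real^'d^'d). fst x ** snd x)"
    unfolding matrix_matrix_mult_def by (intro continuous_on_vec_lambda continuous_intros)
  have "(\<lambda>\<omega>. mat 1 - \<alpha> *\<^sub>R A (Z (Suc k) \<omega>)) \<in> borel_measurable M"
    using measurable_compose[OF Z A] by measurable
  with Suc show ?case
    using borel_measurable_continuous_Pair[OF _ _ mult] by (simp add: fun_eq_iff)
qed simp

lemma matrix_mult_diff_rdistrib: "(A - B) ** C = A ** C - B ** (C :: 'a::ring_1^'n^'n)"
  by (simp add: matrix_matrix_mult_def vec_eq_iff sum_subtractf left_diff_distrib)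

lemma opnorm_prodY_sub_1_le:
  fixes A :: "'z \<Rightarrow> real^'d^'d"
  assumes A: "\<And>z. opnorm (A z) \<le> C" and \<alpha>: "0 \<le> \<alpha>"
  shows "opnorm (prodY A \<alpha> Z k \<omega> - mat 1) \<le> (1 + \<alpha> * C)^k - 1"
proof (induction k)
  case 0 show ?case by (simp add: opnorm_def onorm_zero)
next
  case (Suc k)
  let ?Y = "prodY A \<alpha> Z k \<omega>" and ?B = "A (Z (Suc k) \<omega>)"
  have C: "0 \<le> C" using A[of undefined] opnorm_nonneg order.trans by blast
  have "opnorm ?Y \<le> opnorm (?Y - mat 1) + opnorm (mat 1 :: real^'d^'d)"
    using opnorm_add_le[of "?Y - mat 1" "mat 1"] by simp
  also have "\<dots> \<le> ((1 + \<alpha> * C)^k - 1) + 1" by (intro add_mono Suc.IH opnorm_mat_1_le)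
  finally have Y: "opnorm ?Y \<le> (1 + \<alpha> * C)^k" by simp
  have "(mat 1 - \<alpha> *\<^sub>R ?B) ** ?Y = ?Y - \<alpha> *\<^sub>R (?B ** ?Y)"
    by (simp add: matrix_mult_diff_rdistrib matrix_mul_lid scalar_matrix_assoc)
  hence "prodY A \<alpha> Z (Suc k) \<omega> - mat 1 = (?Y - mat 1) - \<alpha> *\<^sub>R (?B ** ?Y)" by simp
  hence "opnorm (prodY A \<alpha> Z (Suc k) \<omega> - mat 1) \<le> opnorm (?Y - mat 1) + opnorm (\<alpha> *\<^sub>R (?B ** ?Y))"
    by (simp only: opnorm_diff_le)
  also have "opnorm (\<alpha> *\<^sub>R (?B ** ?Y)) \<le> \<alpha> * (C * (1 + \<alpha> * C)^k)"
    unfolding opnorm_scaleR using \<alpha> C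
    by (intro mult_left_mono order.trans[OF opnorm_mult_le] mult_mono A Y opnorm_nonneg) auto
  finally show ?case using Suc by (simp add: algebra_simps)
qed

section \<open>The step-size arithmetic\<close>

lemma one_plus_power_sub_one_le:
  fixes x :: real
  assumes "0 \<le> x" "real n * x \<le> 1"
  shows "(1 + x)^n - 1 \<le> real n * x + (real n * x)\<^sup>2"
proof -
  have "(1 + x)^n \<le> exp x ^ n" using assms by (intro power_mono) (simp_all add: exp_ge_add_one_self)
  also have "\<dots> = exp (real n * x)" by (simp add: exp_of_nat_mult)
  also have "\<dots> \<le> 1 + real n * x + (real n * x)\<^sup>2" using assms by (intro exp_bound) simp_all
  finally show ?thesis by simp
qed

lemma step_size_mul_horizon_le:
  fixes k c a \<alpha> m :: real and t :: nat
  assumes k: "1 \<le> k" and c: "0 < c" and a: "0 < a" and t: "1 \<le> t" and \<alpha>: "0 < \<alpha>"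
    and \<alpha>_le: "\<alpha> \<le> m / real_of_int \<lceil>8 * sqrt k * c / a\<rceil> / real t"
  shows "\<alpha> * real (nat (max 1 \<lceil>8 * sqrt k * c * real t / a\<rceil>)) \<le> m"
proof -
  define N where "N = \<lceil>8 * sqrt k * c / a\<rceil>"
  have N: "1 \<le> N" unfolding N_def using k c a by (simp add: zero_less_mult_iff)
  have "8 * sqrt k * c * real t / a = (8 * sqrt k * c / a) * real t" by simp
  also have "\<dots> \<le> of_int N * real t" unfolding N_def by (intro mult_right_mono le_of_int_ceiling) simp
  also have "\<dots> = of_int (N * int t)" by simp
  finally have "\<lceil>8 * sqrt k * c * real t / a\<rceil> \<le> N * int t" by (simp only: ceiling_le_iff)
  moreover have "1 \<le> N * int t" using N t mult_mono[of 1 N 1 "int t"] by simp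
  ultimately have "real_of_int (max 1 \<lceil>8 * sqrt k * c * real t / a\<rceil>) \<le> real_of_int (N * int t)"
    by (simp only: of_int_le_iff max.bounded_iff)
  hence "real (nat (max 1 \<lceil>8 * sqrt k * c * real t / a\<rceil>)) \<le> real_of_int N * real t"
    by (simp add: of_nat_nat)
  hence "\<alpha> * real (nat (max 1 \<lceil>8 * sqrt k * c * real t / a\<rceil>)) \<le> \<alpha> * (real_of_int N * real t)"
    using \<alpha> by simp
  also have "\<dots> \<le> m" using \<alpha>_le N t by (simp add: N_def field_simps)
  finally show ?thesis .
qed

lemma lsa_step_size_bound:
  fixes k c a \<alpha> m :: real and t :: nat
  defines "h \<equiv> nat (max 1 \<lceil>8 * sqrt k * c * real t / a\<rceil>)"
  assumes k: "1 \<le> k" and c: "0 \<le> c" and a: "0 < a" and t: "1 \<le> t" and \<alpha>: "0 < \<alpha>"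
    and \<alpha>_le: "\<alpha> \<le> Min {m, 1 / (sqrt k * c), a / (6 * exp 1 * k * c\<^sup>2)}
                   / real_of_int \<lceil>8 * sqrt k * c / a\<rceil> / real t"
  shows "sqrt k * (2 * ((1 + \<alpha> * c)^h - 1)) \<le> 2 * (sqrt k * c + a / 6) * \<alpha> * real h"
proof (cases "c = 0")
  case False
  hence c: "0 < c" using c by simp
  define s where "s = sqrt k"
  have s: "1 \<le> s" and k_eq: "k = s\<^sup>2" using k by (simp_all add: s_def)
  define \<tau> where "\<tau> = \<alpha> * real h"
  have \<tau>: "0 \<le> \<tau>" using \<alpha> by (simp add: \<tau>_def)
  have "\<tau> \<le> Min {m, 1 / (s * c), a / (6 * exp 1 * k * c\<^sup>2)}"
    unfolding \<tau>_def h_def s_def by (rule step_size_mul_horizon_le[OF k c a t \<alpha> \<alpha>_le])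
  hence \<tau>1: "\<tau> * c * s \<le> 1" and \<tau>2: "\<tau> * c\<^sup>2 * (6 * exp 1 * s\<^sup>2) \<le> a"
    using c s by (auto simp: k_eq field_simps)
  have "\<tau> * c \<le> 1" using \<tau>1 mult_left_mono[OF s, of "\<tau> * c"] \<tau> c by simp
  hence "(1 + \<alpha> * c)^h - 1 \<le> \<tau> * c + (\<tau> * c)\<^sup>2"
    using one_plus_power_sub_one_le[of "\<alpha> * c" h] \<alpha> c by (simp add: \<tau>_def mult_ac)
  hence "s * ((1 + \<alpha> * c)^h - 1) \<le> s * (\<tau> * c) + s * (\<tau> * c)\<^sup>2"
    using s by (metis distrib_left mult_left_mono order.trans zero_le_one)
  moreover have "s * (\<tau> * c)\<^sup>2 \<le> \<tau> * (a / 6)"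
  proof -
    have "6 * s \<le> 6 * exp 1 * s\<^sup>2"
      using s exp_ge_add_one_self[of 1] mult_mono[of 1 "exp 1" s "s\<^sup>2"] by (simp add: power2_eq_square)
    hence "\<tau> * c\<^sup>2 * (6 * s) \<le> a"
      using \<tau>2 mult_left_mono[of _ _ "\<tau> * c\<^sup>2"] \<tau> by (meson order.trans zero_le_power2 mult_nonneg_nonneg)
    from mult_left_mono[OF this \<tau>] have "s * (\<tau> * c)\<^sup>2 * 6 \<le> \<tau> * a"
      by (simp add: power2_eq_square mult_ac)
    thus ?thesis by simp
  qed
  ultimately show ?thesis by (simp add: s_def \<tau>_def algebra_simps)
qed (use a \<alpha> in \<open>simp add: h_def\<close>)

lemma C_A_upper:
  assumes "bdd_above (range (\<lambda>z. opnorm (A z)))"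
  shows "opnorm (A z) \<le> C_A A Abar"
  unfolding C_A_def using cSUP_upper[OF _ assms] by (meson UNIV_I max.coboundedI1)

lemma pos_def_a_const_pos:
  fixes Q :: "real^'d^'d"
  assumes pd: "pos_def Q"
  shows "0 < a_const Q"
proof -
  have "axis undefined (1::real) \<noteq> (0 :: real^'d)" by (simp add: axis_eq_0_iff)
  hence "Q *v axis undefined 1 \<noteq> 0" using pd unfolding pos_def_def by fastforce
  hence "0 < norm (Q *v axis undefined 1)" by simp
  also have "\<dots> \<le> opnorm Q" using norm_matrix_vector_le_opnorm[of Q "axis undefined 1"] by (simp add: norm_axis_1)
  finally show ?thesis unfolding a_const_def by simp
qed

theorem lemma8:
  fixes P :: "'z::polish_space \<Rightarrow> 'z measure"
    and \<pi> \<xi> :: "'z measure"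
    and t_mix :: nat
    and A :: "'z \<Rightarrow> real^'d^'d"
    and Abar Q :: "real^'d^'d"
    and M :: "'w measure"
    and Z :: "nat \<Rightarrow> 'w \<Rightarrow> 'z"
    and \<alpha> :: real
  assumes kernel: "P \<in> borel \<rightarrow>\<^sub>M prob_algebra borel"
    and inv: "invariant P \<pi>"
    and tmix_pos: "t_mix \<ge> 1"
    and mixing: "\<And>k. k \<ge> 1 \<Longrightarrow> dobrushin (kpow P k) \<le> (1/4) ^ (k div t_mix)"
    and A_meas: "A \<in> borel_measurable borel"
    and Abar_def: "Abar = (\<integral>z. A z \<partial>\<pi>)"
    and hurwitz: "neg_hurwitz Abar"
    and A_bdd: "bdd_above (range (\<lambda>z. opnorm (A z)))"
    and A_bdd': "bdd_above (range (\<lambda>z. opnorm (A z - Abar)))"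
    and Q_pd: "pos_def Q"
    and Q_lyap: "transpose Abar ** Q + Q ** Abar = mat 1"
    and xi: "prob_space \<xi>" "sets \<xi> = sets borel"
    and chain: "markov_chain M Z P \<xi>"
    and alpha_pos: "0 < \<alpha>"
    and alpha_le: "\<alpha> \<le> alpha_inf_M Q Abar (C_A A Abar) / real t_mix"
  shows "AE \<omega> in M.
     mnormQ Q (prodY A \<alpha> Z
                 (nat (max 1 \<lceil>8 * sqrt (kappa Q) * C_A A Abar * real t_mix / a_const Q\<rceil>)) \<omega>
               - (\<integral>\<omega>'. prodY A \<alpha> Z
                 (nat (max 1 \<lceil>8 * sqrt (kappa Q) * C_A A Abar * real t_mix / a_const Q\<rceil>)) \<omega>' \<partial>M))
     \<le> 2 * (sqrt (kappa Q) * C_A A Abar + a_const Q / 6) * \<alpha>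
        * real (nat (max 1 \<lceil>8 * sqrt (kappa Q) * C_A A Abar * real t_mix / a_const Q\<rceil>))"
proof (intro AE_I2)
  fix \<omega>
  let ?C = "C_A A Abar" and ?k = "kappa Q"
  let ?h = "nat (max 1 \<lceil>8 * sqrt ?k * ?C * real t_mix / a_const Q\<rceil>)"
  interpret prob_space M using chain unfolding markov_chain_def by blast
  have A_le: "\<And>z. opnorm (A z) \<le> ?C" using C_A_upper[OF A_bdd] .
  have C: "0 \<le> ?C" using A_le[of undefined] opnorm_nonneg order.trans by blast
  have k: "1 \<le> ?k" by (rule pos_def_kappa_ge_1[OF Q_pd])
  have "\<alpha> \<le> Min {alpha_inf Q Abar, 1 / (sqrt ?k * ?C), a_const Q / (6 * exp 1 * ?k * ?C\<^sup>2)}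
             / real_of_int \<lceil>8 * sqrt ?k * ?C / a_const Q\<rceil> / real t_mix"
    using alpha_le unfolding alpha_inf_M_def .
  from lsa_step_size_bound[OF k C pos_def_a_const_pos[OF Q_pd] tmix_pos alpha_pos this]
  have "sqrt ?k * (2 * ((1 + \<alpha> * ?C)^?h - 1)) \<le> 2 * (sqrt ?k * ?C + a_const Q / 6) * \<alpha> * real ?h" .
  moreover have "mnormQ Q (prodY A \<alpha> Z ?h \<omega> - (\<integral>\<omega>'. prodY A \<alpha> Z ?h \<omega>' \<partial>M))
                   \<le> sqrt ?k * (2 * ((1 + \<alpha> * ?C)^?h - 1))"
    using chain alpha_pos unfolding markov_chain_def
    by (intro mnormQ_sub_integral_le Q_pd measurable_prodY[OF A_meas] opnorm_prodY_sub_1_le A_le) auto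
  ultimately show "mnormQ Q (prodY A \<alpha> Z ?h \<omega> - (\<integral>\<omega>'. prodY A \<alpha> Z ?h \<omega>' \<partial>M))
                   \<le> 2 * (sqrt ?k * ?C + a_const Q / 6) * \<alpha> * real ?h" by linarith
qed

end
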